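(* Fix $0<d<1$ and let $c(x)=x^d$. For common slot instances, in every game under the coordination mechanism described in the context, for every optimal assignment $s^*$ there exists a payment vector $\xi$ such that $(s^*,\xi)$ is a Nash equilibrium.
   Context: A game consists of a cost function $c$ (here $c(x)=x^d$, $c(0)=0$), slots $t=1,\dots,T$, and a set of jobs, each job $j$ having integer release time $r_j$ and deadline $d_j$ with $0<r_j<d_j<T$. A common slot instance is one in which some slot lies in $[r_j,d_j)$ for every job $j$. An assignment $s$ gives each job a slot $s_j$ with $r_j\le s_j<d_j$; the load is $l_t(s)=|\{j:s_j=t\}|$ and $C(s)=\sum_{t=1}^T c(l_t(s))$; an optimal assignment minimizes $C$. In the coordination mechanism, each job $j$ chooses a pair $(s_j,\xi_j)$ with $s_j\in[r_j,d_j)$ and payment $\xi_j\ge0$. Slot $t$ is opened iff $\sum_{j:s_j=t}\xi_j\ge c(l_t(s))$; a job whose slot is not opened has infinite cost, otherwise its cost is $\xi_j$. A profile $(s,\xi)$ is a Nash equilibrium if for every job $j$: (i) $\sum_{j':s_{j'}=s_j}\xi_{j'}\ge c(l_{s_j}(s))$; (ii) for every $t\in[r_j,d_j)\setminus\{s_j\}$, $\xi_j\le\max\{0,\,c(l_t(s)+1)-\sum_{j':s_{j'}=t}\xi_{j'}\}$; (iii) $\xi_j\le\max\{0,\,c(l_{s_j}(s))-\sum_{j':s_{j'}=s_j,\,j'\ne j}\xi_{j'}\}$. *)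

theory Defs
  imports Complex_Main
begin

definition cost :: "real \<Rightarrow> nat \<Rightarrow> real" where
  "cost d x = (if x = 0 then 0 else (real x) powr d)"

text \<open>A game: finite job set J, release times r, deadlines dl, horizon T.\<close>
definition valid_game :: "'j set \<Rightarrow> ('j \<Rightarrow> nat) \<Rightarrow> ('j \<Rightarrow> nat) \<Rightarrow> nat \<Rightarrow> bool" where
  "valid_game J r dl T \<longleftrightarrow> finite J \<and> (\<forall>j\<in>J. 0 < r j \<and> r j < dl j \<and> dl j < T)"

definition common_slot :: "'j set \<Rightarrow> ('j \<Rightarrow> nat) \<Rightarrow> ('j \<Rightarrow> nat) \<Rightarrow> nat \<Rightarrow> bool" where
  "common_slot J r dl T \<longleftrightarrow> (\<exists>t\<in>{1..T}. \<forall>j\<in>J. r j \<le> t \<and> t < dl j)"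

definition feasible :: "'j set \<Rightarrow> ('j \<Rightarrow> nat) \<Rightarrow> ('j \<Rightarrow> nat) \<Rightarrow> ('j \<Rightarrow> nat) \<Rightarrow> bool" where
  "feasible J r dl s \<longleftrightarrow> (\<forall>j\<in>J. r j \<le> s j \<and> s j < dl j)"

definition load :: "'j set \<Rightarrow> ('j \<Rightarrow> nat) \<Rightarrow> nat \<Rightarrow> nat" where
  "load J s t = card {j\<in>J. s j = t}"

definition total_cost :: "real \<Rightarrow> 'j set \<Rightarrow> nat \<Rightarrow> ('j \<Rightarrow> nat) \<Rightarrow> real" where
  "total_cost d J T s = (\<Sum>t\<in>{1..T}. cost d (load J s t))"

definition optimal :: "real \<Rightarrow> 'j set \<Rightarrow> ('j \<Rightarrow> nat) \<Rightarrow> ('j \<Rightarrow> nat) \<Rightarrow> nat \<Rightarrow> ('j \<Rightarrow> nat) \<Rightarrow> bool" where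
  "optimal d J r dl T s \<longleftrightarrow> feasible J r dl s \<and>
     (\<forall>s'. feasible J r dl s' \<longrightarrow> total_cost d J T s \<le> total_cost d J T s')"

definition paid :: "'j set \<Rightarrow> ('j \<Rightarrow> nat) \<Rightarrow> ('j \<Rightarrow> real) \<Rightarrow> nat \<Rightarrow> real" where
  "paid J s \<xi> t = (\<Sum>j'\<in>{j'\<in>J. s j' = t}. \<xi> j')"

definition nash :: "real \<Rightarrow> 'j set \<Rightarrow> ('j \<Rightarrow> nat) \<Rightarrow> ('j \<Rightarrow> nat) \<Rightarrow> ('j \<Rightarrow> nat) \<Rightarrow> ('j \<Rightarrow> real) \<Rightarrow> bool" where
  "nash d J r dl s \<xi> \<longleftrightarrow> feasible J r dl s \<and> (\<forall>j\<in>J. 0 \<le> \<xi> j) \<and>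
     (\<forall>j\<in>J.
        paid J s \<xi> (s j) \<ge> cost d (load J s (s j)) \<and>
        (\<forall>t. r j \<le> t \<and> t < dl j \<and> t \<noteq> s j \<longrightarrow>
            \<xi> j \<le> max 0 (cost d (load J s t + 1) - paid J s \<xi> t)) \<and>
        \<xi> j \<le> max 0 (cost d (load J s (s j)) - (\<Sum>j'\<in>{j'\<in>J. s j' = s j \<and> j' \<noteq> j}. \<xi> j')))"

end

theory Submission
  imports Defs
begin

text \<open>Charging every job its share c(l)/l = l^(d-1) of the slot it uses writes the total cost as a
  sum over jobs. For d < 1 the share strictly decreases in the load, so an optimal assignment puts
  all n jobs into one slot, namely a common slot: otherwise some job pays more than n^(d-1), the
  share it would pay there. Splitting c(n) equally is then an equilibrium, since a deviating job
  would have to open an empty slot at cost c(1) = 1 \<ge> n^(d-1).\<close>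

lemma load_le_card:
  assumes "finite J"
  shows "load J s t \<le> card J"
  unfolding load_def using assms by (intro card_mono) auto

lemma load_pos:
  assumes "finite J" and "j \<in> J"
  shows "0 < load J s (s j)"
  unfolding load_def using assms by (auto simp: card_gt_0_iff)

lemma cost_div_load:
  assumes "0 < l"
  shows "cost d l / real l = real l powr (d - 1)"
  using assms by (simp add: cost_def powr_diff)

lemma total_cost_eq_sum_shares:
  assumes "valid_game J r dl T" and "feasible J r dl s"
  shows "total_cost d J T s = (\<Sum>j\<in>J. cost d (load J s (s j)) / real (load J s (s j)))"
proof -
  have fin: "finite J" using assms(1) by (simp add: valid_game_def)
  have slots: "s ` J \<subseteq> {1..T}"
    using assms unfolding valid_game_def feasible_def by fastforce
  have "(\<Sum>j\<in>J. cost d (load J s (s j)) / real (load J s (s j)))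
      = (\<Sum>t\<in>{1..T}. \<Sum>j\<in>{j\<in>J. s j = t}. cost d (load J s t) / real (load J s t))"
    by (subst sum.group[OF fin finite_atLeastAtMost slots, symmetric]) (auto intro: sum.cong)
  also have "\<dots> = (\<Sum>t\<in>{1..T}. real (load J s t) * (cost d (load J s t) / real (load J s t)))"
    by (simp add: load_def)
  also have "\<dots> = total_cost d J T s"
    unfolding total_cost_def by (intro sum.cong) (auto simp: cost_def)
  finally show ?thesis ..
qed

lemma optimal_load_eq_card:
  assumes "d < 1" and game: "valid_game J r dl T" and "common_slot J r dl T"
    and opt: "optimal d J r dl T s" and "j \<in> J"
  shows "load J s (s j) = card J"
proof (rule ccontr)
  assume ne: "load J s (s j) \<noteq> card J"
  have fin: "finite J" using game by (simp add: valid_game_def)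
  have feas: "feasible J r dl s" using opt by (simp add: optimal_def)
  obtain t0 where "t0 \<in> {1..T}" and t0: "\<forall>j\<in>J. r j \<le> t0 \<and> t0 < dl j"
    using assms(3) by (auto simp: common_slot_def)
  define s' where "s' = (\<lambda>_::'a. t0)"
  have feas': "feasible J r dl s'" using t0 by (simp add: feasible_def s'_def)
  have load': "load J s' (s' k) = card J" for k by (simp add: load_def s'_def)
  have share: "cost d (load J s (s k)) / real (load J s (s k)) = real (load J s (s k)) powr (d - 1)"
    if "k \<in> J" for k
    using cost_div_load load_pos[OF fin that] by blast
  have "card J > 0" using fin \<open>j \<in> J\<close> by (auto simp: card_gt_0_iff)
  then have "total_cost d J T s' = (\<Sum>k\<in>J. real (card J) powr (d - 1))"
    using total_cost_eq_sum_shares[OF game feas'] by (simp add: load' cost_div_load)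
  also have "\<dots> < (\<Sum>k\<in>J. real (load J s (s k)) powr (d - 1))"
  proof (rule sum_strict_mono_ex1[OF fin])
    show "\<forall>k\<in>J. real (card J) powr (d - 1) \<le> real (load J s (s k)) powr (d - 1)"
      using load_pos[OF fin] load_le_card[OF fin] \<open>d < 1\<close>
      by (auto intro!: powr_mono2' simp del: of_nat_less_0_iff)
    show "\<exists>k\<in>J. real (card J) powr (d - 1) < real (load J s (s k)) powr (d - 1)"
      using load_pos[OF fin \<open>j \<in> J\<close>] load_le_card[OF fin, of s "s j"] ne \<open>d < 1\<close> \<open>j \<in> J\<close>
      by (intro bexI[of _ j] powr_less_mono2_neg) auto
  qed
  also have "\<dots> = total_cost d J T s"
    using total_cost_eq_sum_shares[OF game feas] share by simp
  finally show False using opt feas' by (auto simp: optimal_def)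
qed

lemma optimal_single_slot:
  assumes "d < 1" and "valid_game J r dl T" and "common_slot J r dl T"
    and "optimal d J r dl T s" and "j \<in> J" and "k \<in> J"
  shows "s k = s j"
proof -
  have "finite J" using assms(2) by (simp add: valid_game_def)
  moreover have "card {x\<in>J. s x = s j} = card J"
    using optimal_load_eq_card[OF assms(1-5)] by (simp add: load_def)
  ultimately have "{x\<in>J. s x = s j} = J"
    by (intro card_subset_eq) auto
  then show ?thesis using \<open>k \<in> J\<close> by blast
qed

lemma nash_equal_split:
  assumes "d \<le> 1" and "finite J" and feas: "feasible J r dl s"
    and single: "\<And>j k. j \<in> J \<Longrightarrow> k \<in> J \<Longrightarrow> s k = s j"
  shows "nash d J r dl s (\<lambda>_. real (card J) powr (d - 1))"
  unfolding nash_def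
proof (intro conjI ballI allI impI)
  fix j assume j: "j \<in> J"
  have users: "{j'\<in>J. s j' = s j} = J" and others: "{j'\<in>J. s j' = s j \<and> j' \<noteq> j} = J - {j}"
    using single[OF j] by auto
  have "card J \<ge> 1" using assms(2) j by (auto simp: Suc_le_eq card_gt_0_iff)
  then have cost_card: "cost d (card J) = real (card J) * real (card J) powr (d - 1)"
    by (simp add: cost_def powr_diff)
  have load_card: "load J s (s j) = card J" by (simp add: load_def users)
  show "cost d (load J s (s j)) \<le> paid J s (\<lambda>_. real (card J) powr (d - 1)) (s j)"
    by (simp add: paid_def users load_card cost_card)
  have "(\<Sum>j'\<in>{j'\<in>J. s j' = s j \<and> j' \<noteq> j}. real (card J) powr (d - 1))
      = (real (card J) - 1) * real (card J) powr (d - 1)"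
    using assms(2) j \<open>card J \<ge> 1\<close> by (simp add: others of_nat_diff)
  then show "real (card J) powr (d - 1) \<le> max 0 (cost d (load J s (s j))
      - (\<Sum>j'\<in>{j'\<in>J. s j' = s j \<and> j' \<noteq> j}. real (card J) powr (d - 1)))"
    by (simp add: load_card cost_card algebra_simps)
  fix t assume t: "r j \<le> t \<and> t < dl j \<and> t \<noteq> s j"
  have empty: "{j'\<in>J. s j' = t} = {}" using single[OF j] t by auto
  have "real (card J) powr (d - 1) \<le> 1 powr (d - 1)"
    using \<open>card J \<ge> 1\<close> \<open>d \<le> 1\<close> by (intro powr_mono2') auto
  then show "real (card J) powr (d - 1) \<le> max 0 (cost d (load J s t + 1)
      - paid J s (\<lambda>_. real (card J) powr (d - 1)) t)"
    by (simp add: load_def paid_def empty cost_def)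
qed (use feas in auto)

theorem theorem6:
  fixes d :: real and J :: "'j set" and r dl :: "'j \<Rightarrow> nat" and T :: nat and s :: "'j \<Rightarrow> nat"
  assumes "0 < d" and "d < 1"
    and "valid_game J r dl T"
    and "common_slot J r dl T"
    and "optimal d J r dl T s"
  shows "\<exists>\<xi> :: 'j \<Rightarrow> real. nash d J r dl s \<xi>"
proof
  show "nash d J r dl s (\<lambda>_. real (card J) powr (d - 1))"
  proof (rule nash_equal_split)
    show "d \<le> 1" using assms(2) by simp
    show "finite J" using assms(3) by (simp add: valid_game_def)
    show "feasible J r dl s" using assms(5) by (simp add: optimal_def)
    show "s k = s j" if "j \<in> J" "k \<in> J" for j k
      using optimal_single_slot[OF assms(2-5) that] .
  qed
qed

end
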